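(* Let $G$ be a countable even-by-quotient abelian group, let $r_0(G)$ be its torsion free rank and $r_2(G)$ its $2$-rank. Then there is a monomorphism \[f:G\to\bigoplus_{i=1}^{r_0(G)}\mathbb Z[\tfrac12]\oplus\bigoplus_{i=1}^{r_2(G)}\mathbb Z(2^\infty).\] Moreover, given a maximal independent system $L=\{g_i\}_{i=1}^{r_0(G)}\cup\{h_i\}_{i=1}^{r_2(G)}$ of $G$ with the $g_i$ of infinite order and the $h_i$ in the socle of $G$, $f$ can be chosen so that $f(g_i)$ is the element $1$ of the $i$-th $\mathbb Z[\tfrac12]$ summand (and $0$ elsewhere) and $f(h_i)$ is the element of order $2$ of the $i$-th $\mathbb Z(2^\infty)$ summand (and $0$ elsewhere).
   Context: A set of nonzero elements $\{x_j\}$ of an abelian group is independent if $\sum n_jx_j=0$ implies $n_jx_j=0$ for all $j$. $G$ is even-by-quotient if, for $H$ the subgroup generated by a maximal independent system of elements of infinite order, every element of $G/H$ has order a power of $2$. $r_0(G)=\dim_{\mathbb Q}(G\otimes\mathbb Q)$; $r_2(G)$ is the cardinality of a maximal independent system of elements of order $2$. The socle of $G$ is the subgroup of elements whose order is square-free (here: of order $1$ or $2$). $\mathbb Z[\tfrac12]=\{m/2^k\}$ and $\mathbb Z(2^\infty)=\varinjlim(\mathbb Z_2\to\mathbb Z_4\to\cdots)\cong\mathbb Z[\tfrac12]/\mathbb Z$. *)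

theory Defs
  imports Complex_Main "HOL-Library.Countable_Set" "HOL-Library.Extended_Nat"
begin

definition zmul :: "int \<Rightarrow> 'a::ab_group_add \<Rightarrow> 'a" where
  "zmul k x = (if 0 \<le> k then (((+) x) ^^ nat k) 0 else - ((((+) x) ^^ nat (- k)) 0))"

definition independent_set :: "'a::ab_group_add set \<Rightarrow> bool" where
  "independent_set S \<longleftrightarrow> 0 \<notin> S \<and>
     (\<forall>F n. finite F \<and> F \<subseteq> S \<and> (\<Sum>x\<in>F. zmul (n x) x) = 0 \<longrightarrow>
            (\<forall>x\<in>F. zmul (n x) x = 0))"

definition maximal_indep :: "('a::ab_group_add \<Rightarrow> bool) \<Rightarrow> 'a set \<Rightarrow> bool" where
  "maximal_indep P S \<longleftrightarrow> independent_set S \<and> (\<forall>x\<in>S. P x) \<and>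
     (\<forall>S'. S \<subseteq> S' \<and> independent_set S' \<and> (\<forall>x\<in>S'. P x) \<longrightarrow> S' = S)"

definition infinite_order :: "'a::ab_group_add \<Rightarrow> bool" where
  "infinite_order x \<longleftrightarrow> (\<forall>n::nat. n > 0 \<longrightarrow> zmul (int n) x \<noteq> 0)"

definition order_two :: "'a::ab_group_add \<Rightarrow> bool" where
  "order_two x \<longleftrightarrow> x \<noteq> 0 \<and> x + x = 0"

definition socle :: "'a::ab_group_add set" where
  "socle = {x. x + x = 0}"

definition gen_subgroup :: "'a::ab_group_add set \<Rightarrow> 'a set" where
  "gen_subgroup S = {(\<Sum>x\<in>F. zmul (n x) x) | F n. finite F \<and> F \<subseteq> S}"

definition ecard :: "'a set \<Rightarrow> enat" where
  "ecard S = (if finite S then enat (card S) else \<infinity>)"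

definition r0 :: "'a::ab_group_add itself \<Rightarrow> enat" where
  "r0 _ = (SOME r. \<exists>S::'a set. maximal_indep infinite_order S \<and> r = ecard S)"

definition r2 :: "'a::ab_group_add itself \<Rightarrow> enat" where
  "r2 _ = (SOME r. \<exists>S::'a set. maximal_indep order_two S \<and> r = ecard S)"

definition quotient_2primary :: "'a::ab_group_add set \<Rightarrow> bool" where
  "quotient_2primary H \<longleftrightarrow> (\<forall>x. \<exists>k::nat. zmul (2 ^ k) x \<in> H)"

definition even_by_quotient :: "'a::ab_group_add itself \<Rightarrow> bool" where
  "even_by_quotient _ \<longleftrightarrow> (\<exists>S::'a set. maximal_indep infinite_order S \<and>
       quotient_2primary (gen_subgroup S))"

definition dyadic :: "rat \<Rightarrow> bool" where
  "dyadic q \<longleftrightarrow> (\<exists>m::int. \<exists>k::nat. q = of_int m / 2 ^ k)"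

(* The target group  (+)_{i < r0} Z[1/2]  (+)  (+)_{i < r2} Z(2^oo):
   pairs (a, b) of finitely supported sequences; a i in Z[1/2] (support in {i. i < r0}),
   b i a dyadic rational in [0,1) representing Z[1/2]/Z = Z(2^oo) (support in {i. i < r2}). *)
definition target :: "enat \<Rightarrow> enat \<Rightarrow> ((nat \<Rightarrow> rat) \<times> (nat \<Rightarrow> rat)) set" where
  "target m k = {(a, b). finite {i. a i \<noteq> 0} \<and> finite {i. b i \<noteq> 0} \<and>
       (\<forall>i. a i \<noteq> 0 \<longrightarrow> enat i < m) \<and> (\<forall>i. b i \<noteq> 0 \<longrightarrow> enat i < k) \<and>
       (\<forall>i. dyadic (a i)) \<and> (\<forall>i. dyadic (b i) \<and> 0 \<le> b i \<and> b i < 1)}"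

definition target_add :: "(nat \<Rightarrow> rat) \<times> (nat \<Rightarrow> rat) \<Rightarrow> (nat \<Rightarrow> rat) \<times> (nat \<Rightarrow> rat)
    \<Rightarrow> (nat \<Rightarrow> rat) \<times> (nat \<Rightarrow> rat)" where
  "target_add p q = ((\<lambda>i. fst p i + fst q i), (\<lambda>i. frac (snd p i + snd q i)))"

definition monomorphism_into :: "enat \<Rightarrow> enat \<Rightarrow> ('a::ab_group_add \<Rightarrow> (nat \<Rightarrow> rat) \<times> (nat \<Rightarrow> rat)) \<Rightarrow> bool" where
  "monomorphism_into m k f \<longleftrightarrow> inj f \<and> (\<forall>x. f x \<in> target m k) \<and>
       (\<forall>x y. f (x + y) = target_add (f x) (f y))"

end

theory Submission
  imports Defs "HOL-Library.Function_Algebras" "HOL-Library.Product_Plus" "HOL-Computational_Algebra.Primes"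
begin

text \<open>
  Let \<open>L = {g\<^sub>i} \<union> {h\<^sub>j}\<close> be a maximal independent system with the \<open>g\<^sub>i\<close> of infinite order, the
  \<open>h\<^sub>j\<close> of order 2 and \<open>G/\<langle>{g\<^sub>i}\<rangle>\<close> a 2-group. On \<open>\<langle>L\<rangle>\<close> the prescribed assignment
  \<open>g\<^sub>i \<mapsto> e\<^sub>i\<close>, \<open>h\<^sub>j \<mapsto> \<onehalf>e\<^sub>j\<close> is a well-defined homomorphism, since independence means that the only
  relations are the torsion relations \<open>2h\<^sub>j = 0\<close>. As \<open>G/\<langle>L\<rangle>\<close> is a 2-group and the target is
  2-divisible, it extends to \<open>G\<close> by Zorn's lemma: a maximal partial extension is total, because an
  element \<open>x\<close> outside its domain, with \<open>2\<^sup>e x\<close> the least power of two inside, can be sent to a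
  \<open>2\<^sup>e\<close>-th root of the image of \<open>2\<^sup>e x\<close>. The extension is injective since it is injective on
  \<open>\<langle>L\<rangle>\<close> and \<open>\<langle>L\<rangle>\<close> is essential, maximality of \<open>L\<close> meaning that every nonzero element has a
  nonzero multiple in \<open>\<langle>L\<rangle>\<close>.

  For the first claim, a maximal system of elements of infinite order with 2-primary quotient
  together with a maximal system of elements of order 2 is such an \<open>L\<close>. Since \<open>r\<^sub>0\<close> may be computed
  from a different maximal system \<open>S'\<close>, it remains to see that the number of \<open>g\<^sub>i\<close> is at most
  \<open>|S'|\<close>: the unit vectors \<open>e\<^sub>i\<close> lie in the \<open>\<rat>\<close>-span of the images of \<open>S'\<close>.
\<close>

section \<open>Integer multiples\<close>

lemma zmul_nat: "zmul (int n) x = ((+) x ^^ n) 0"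
  by (simp add: zmul_def)

lemma zmul_minus_nat: "zmul (- int n) x = - (((+) x ^^ n) 0)"
  by (cases n) (simp_all add: zmul_def del: of_nat_Suc)

lemma zmul_add1: "zmul (k + 1) x = zmul k x + x"
proof (cases k rule: int_cases4)
  case (nonneg n)
  then show ?thesis using zmul_nat[of "Suc n" x] by (simp add: zmul_nat add.commute)
next
  case (neg n)
  then obtain m where "k = - int (Suc m)" by (metis gr0_conv_Suc)
  moreover have "- int (Suc m) + 1 = - int m" by simp
  ultimately show ?thesis by (simp only: zmul_minus_nat) simp
qed

lemma zmul_1: "zmul 1 x = x"
  using zmul_add1[of 0 x] by (simp add: zmul_def)

lemma zmul_diff1: "zmul (k - 1) x = zmul k x - x"
  using zmul_add1[of "k - 1" x] by simp

lemma zmul_add: "zmul (a + b) x = zmul a x + zmul b x"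
proof (induction a rule: int_induct[where k = 0])
  case (step1 i)
  have "zmul (i + 1 + b) x = zmul (i + b) x + x" using zmul_add1[of "i + b" x] by (simp add: ac_simps)
  then show ?case by (simp only: step1.IH zmul_add1) (simp add: ac_simps)
next
  case (step2 i)
  have "zmul (i - 1 + b) x = zmul (i + b) x - x" using zmul_diff1[of "i + b" x] by (simp add: algebra_simps)
  then show ?case by (simp only: step2.IH zmul_diff1) (simp add: algebra_simps)
qed (simp add: zmul_def)

lemma zmul_add_right: "zmul n (x + y) = zmul n x + zmul n y"
proof (induction n rule: int_induct[where k = 0])
  case (step1 i) then show ?case by (simp only: zmul_add1) (simp add: ac_simps)
next
  case (step2 i) then show ?case by (simp only: zmul_diff1) (simp add: algebra_simps)
qed (simp add: zmul_def)

lemma zmul_mult: "zmul a (zmul b x) = zmul (a * b) x"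
proof (induction a rule: int_induct[where k = 0])
  case (step1 i) then show ?case by (simp only: zmul_add1 distrib_right zmul_add zmul_1 mult_1)
next
  case (step2 i)
  have "zmul (i * b - b) x = zmul (i * b) x - zmul b x"
    using zmul_add[of "i * b - b" b x] by (simp add: algebra_simps)
  with step2 show ?case by (simp only: zmul_diff1 left_diff_distrib) simp
qed (simp add: zmul_def)

interpretation int_module: module "zmul :: int \<Rightarrow> 'a::ab_group_add \<Rightarrow> 'a"
  by unfold_locales (simp_all add: zmul_add zmul_add_right zmul_mult zmul_1)

lemma (in additive) zmul: "f (zmul n x) = zmul n (f x)"
proof (induction n rule: int_induct[where k = 0])
  case (step1 i) then show ?case by (simp add: zmul_add1 add)
next
  case (step2 i) then show ?case by (simp add: zmul_diff1 diff)
qed (simp add: zero)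

lemma additive_fst: "additive fst"
  and additive_snd: "additive snd"
  and additive_apply: "additive (\<lambda>f. f i)"
  by unfold_locales simp_all

lemma zmul_Pair: "zmul n (x, y) = (zmul n x, zmul n y)"
  using additive.zmul[OF additive_fst, of n "(x, y)"] additive.zmul[OF additive_snd, of n "(x, y)"]
  by (simp add: prod_eq_iff)

lemma zmul_apply: "zmul n f i = zmul n (f i)"
  using additive.zmul[OF additive_apply] .

lemma zmul_of_int: "zmul n (a :: 'a::ring_1) = of_int n * a"
proof (induction n rule: int_induct[where k = 0])
  case (step1 i) then show ?case by (simp add: zmul_add1 distrib_right)
next
  case (step2 i) then show ?case by (simp add: zmul_diff1 left_diff_distrib)
qed simp

lemma infinite_order_zmul_eq_0_iff:
  assumes "infinite_order x"
  shows "zmul n x = 0 \<longleftrightarrow> n = 0"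
proof
  assume n: "zmul n x = 0"
  show "n = 0"
  proof (rule ccontr)
    assume "n \<noteq> 0"
    then have "nat \<bar>n\<bar> > 0" by simp
    then have "zmul (int (nat \<bar>n\<bar>)) x \<noteq> 0" using assms unfolding infinite_order_def by blast
    moreover have "zmul (int (nat \<bar>n\<bar>)) x = 0" using n by (cases "n \<ge> 0") simp_all
    ultimately show False by contradiction
  qed
qed simp

lemma zmul_2: "zmul 2 x = x + x"
  using zmul_add[of 1 1 x] by (simp add: zmul_1)

lemma zmul_self_inverse:
  assumes "x + x = 0"
  shows "zmul n x = (if even n then 0 else x)"
proof -
  have "zmul 2 x = 0" using assms by (simp add: zmul_2)
  then have "zmul (2 * q) x = 0" for q by (metis int_module.scale_scale int_module.scale_zero_right mult.commute)
  then show ?thesis by (cases "even n") (auto elim!: evenE oddE simp: zmul_add zmul_1)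
qed

lemma gen_subgroup_eq_span: "gen_subgroup S = int_module.span S"
  unfolding gen_subgroup_def int_module.span_explicit ..

lemma int_module_subspaceI:
  assumes "0 \<in> S" and add: "\<And>x y. x \<in> S \<Longrightarrow> y \<in> S \<Longrightarrow> x + y \<in> S"
    and uminus: "\<And>x. x \<in> S \<Longrightarrow> - x \<in> S"
  shows "int_module.subspace S"
proof (rule int_module.subspaceI)
  fix c x assume x: "x \<in> S"
  show "zmul c x \<in> S"
  proof (induction c rule: int_induct[where k = 0])
    case (step1 i)
    have "zmul i x + x \<in> S" using step1.IH x by (rule add)
    then show ?case by (simp add: zmul_add1)
  next
    case (step2 i)
    have "zmul i x + - x \<in> S" using step2.IH uminus[OF x] by (rule add)
    then show ?case by (simp add: zmul_diff1)
  qed (simp add: \<open>0 \<in> S\<close>)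
qed (use assms in auto)

section \<open>Independent systems and essential subgroups\<close>

lemma independent_set_subset: "independent_set S \<Longrightarrow> T \<subseteq> S \<Longrightarrow> independent_set T"
  unfolding independent_set_def by (meson order_trans subsetD)

lemma independent_setD:
  "independent_set S \<Longrightarrow> finite F \<Longrightarrow> F \<subseteq> S \<Longrightarrow> (\<Sum>y\<in>F. zmul (n y) y) = 0 \<Longrightarrow> x \<in> F
    \<Longrightarrow> zmul (n x) x = 0"
  unfolding independent_set_def by blast

lemma independent_set_insertD:
  assumes ind: "independent_set (insert x L)" and "x \<notin> L" and c: "zmul c x \<in> int_module.span L"
  shows "zmul c x = 0"
proof -
  obtain F n where F: "finite F" "F \<subseteq> L" "zmul c x = (\<Sum>y\<in>F. zmul (n y) y)"
    using c unfolding int_module.span_explicit by blast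
  define n' where "n' y = (if y = x then c else - n y)" for y
  have "x \<notin> F" using F(2) \<open>x \<notin> L\<close> by blast
  then have "(\<Sum>y\<in>F. zmul (n' y) y) = (\<Sum>y\<in>F. - zmul (n y) y)"
    by (intro sum.cong) (auto simp: n'_def)
  then have "(\<Sum>y\<in>insert x F. zmul (n' y) y) = 0"
    using F \<open>x \<notin> F\<close> by (simp add: n'_def sum_negf)
  then have "zmul (n' x) x = 0"
    using ind F by (intro independent_setD[of "insert x L" "insert x F"]) auto
  then show "zmul c x = 0" by (simp add: n'_def)
qed

lemma independent_set_insertI:
  assumes L: "independent_set L" and "x \<noteq> 0"
    and multiples: "\<And>c. zmul c x \<in> int_module.span L \<Longrightarrow> zmul c x = 0"
  shows "independent_set (insert x L)"
  unfolding independent_set_def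
proof (intro conjI allI impI)
  show "0 \<notin> insert x L" using L \<open>x \<noteq> 0\<close> by (simp add: independent_set_def)
next
  fix F n assume F: "finite F \<and> F \<subseteq> insert x L \<and> (\<Sum>y\<in>F. zmul (n y) y) = 0"
  show "\<forall>y\<in>F. zmul (n y) y = 0"
  proof (cases "x \<in> F")
    case False
    then show ?thesis using L F unfolding independent_set_def by blast
  next
    case True
    let ?F = "F - {x}"
    have "(\<Sum>y\<in>F. zmul (n y) y) = zmul (n x) x + (\<Sum>y\<in>?F. zmul (n y) y)"
      using F True by (intro sum.remove) auto
    then have split: "zmul (n x) x + (\<Sum>y\<in>?F. zmul (n y) y) = 0" using F by simp
    have "zmul (n x) x = (\<Sum>y\<in>?F. zmul (- n y) y)"
      using split by (simp add: sum_negf eq_neg_iff_add_eq_0)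
    also have "\<dots> \<in> int_module.span L"
      using F by (intro int_module.span_sum int_module.span_scale int_module.span_base) auto
    finally have nx: "zmul (n x) x = 0" by (rule multiples)
    then have "(\<Sum>y\<in>?F. zmul (n y) y) = 0" using split by simp
    then have "zmul (n y) y = 0" if "y \<in> ?F" for y
      using L F that by (intro independent_setD[of L ?F]) auto
    then show ?thesis using nx by blast
  qed
qed

definition essential :: "'a::ab_group_add set \<Rightarrow> bool" where
  "essential H \<longleftrightarrow> (\<forall>x. x \<noteq> 0 \<longrightarrow> (\<exists>c. zmul c x \<noteq> 0 \<and> zmul c x \<in> H))"

lemma maximal_indep_multiple_in_span:
  assumes max: "maximal_indep P L" and "P x" "x \<noteq> 0"
  shows "\<exists>c. zmul c x \<noteq> 0 \<and> zmul c x \<in> int_module.span L"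
proof (cases "x \<in> L")
  case True
  then show ?thesis using \<open>x \<noteq> 0\<close> by (intro exI[of _ 1]) (simp add: zmul_1 int_module.span_base)
next
  case False
  have L: "independent_set L" using max by (simp add: maximal_indep_def)
  have "\<not> independent_set (insert x L)"
  proof
    assume "independent_set (insert x L)"
    moreover have "\<forall>y\<in>insert x L. P y" using max \<open>P x\<close> by (simp add: maximal_indep_def)
    ultimately have "insert x L = L" using max unfolding maximal_indep_def by blast
    then show False using False by blast
  qed
  then show ?thesis using independent_set_insertI[OF L \<open>x \<noteq> 0\<close>] by blast
qed

lemma maximal_indep_iff_essential:
  "maximal_indep (\<lambda>_. True) L \<longleftrightarrow> independent_set L \<and> essential (int_module.span L)"
proof
  assume "maximal_indep (\<lambda>_. True) L"
  then show "independent_set L \<and> essential (int_module.span L)"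
    using maximal_indep_multiple_in_span[of "\<lambda>_. True" L]
    unfolding essential_def maximal_indep_def by blast
next
  assume L: "independent_set L \<and> essential (int_module.span L)"
  have "S = L" if S: "L \<subseteq> S" "independent_set S" for S
  proof (rule ccontr)
    assume "S \<noteq> L"
    then obtain x where x: "x \<in> S" "x \<notin> L" using S by blast
    then have "x \<noteq> 0" using S unfolding independent_set_def by blast
    then obtain c where c: "zmul c x \<noteq> 0" "zmul c x \<in> int_module.span L"
      using L unfolding essential_def by blast
    have "independent_set (insert x L)" using S x by (blast intro: independent_set_subset)
    then show False using independent_set_insertD x(2) c by blast
  qed
  then show "maximal_indep (\<lambda>_. True) L" using L unfolding maximal_indep_def by blast
qed

lemma additive_inj_if_essential:
  assumes F: "additive F" and H: "essential H" and ker: "\<And>z. z \<in> H \<Longrightarrow> F z = 0 \<Longrightarrow> z = 0"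
  shows "inj F"
proof -
  have "z = 0" if z: "F z = 0" for z
  proof (rule ccontr)
    assume "z \<noteq> 0"
    then obtain c where c: "zmul c z \<noteq> 0" "zmul c z \<in> H" using H unfolding essential_def by blast
    have "F (zmul c z) = 0" using z by (simp add: additive.zmul[OF F])
    then show False using ker c by blast
  qed
  then show ?thesis by (intro injI) (metis additive.diff[OF F] eq_iff_diff_eq_0)
qed

section \<open>Extending homomorphisms into 2-divisible groups\<close>

text \<open>\<open>R\<close> is the graph of a homomorphism from the subgroup \<open>Domain R\<close> into \<open>V\<close>.\<close>

definition partial_hom :: "'b::ab_group_add set \<Rightarrow> ('a::ab_group_add \<times> 'b) set \<Rightarrow> bool" where
  "partial_hom V R \<longleftrightarrow> int_module.subspace R \<and> single_valued R \<and> snd ` R \<subseteq> V"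

lemma single_valued_subspace_iff:
  assumes R: "int_module.subspace R"
  shows "single_valued R \<longleftrightarrow> (\<forall>v. (0, v) \<in> R \<longrightarrow> v = 0)"
proof
  assume "single_valued R"
  moreover have "(0, 0) \<in> R" using int_module.subspace_0[OF R] by (simp add: zero_prod_def)
  ultimately show "\<forall>v. (0, v) \<in> R \<longrightarrow> v = 0" by (auto dest: single_valuedD)
next
  assume zero: "\<forall>v. (0, v) \<in> R \<longrightarrow> v = 0"
  show "single_valued R"
  proof (rule single_valuedI)
    fix x y z assume "(x, y) \<in> R" "(x, z) \<in> R"
    then have "(0, y - z) \<in> R" using int_module.subspace_diff[OF R] by fastforce
    then have "y - z = 0" using zero by blast
    then show "y = z" by simp
  qed
qed

lemma subspace_Domain:
  assumes R: "int_module.subspace R"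
  shows "int_module.subspace (Domain R)"
proof (rule int_module.subspaceI)
  show "0 \<in> Domain R" using int_module.subspace_0[OF R] by (force simp: zero_prod_def)
next
  fix x y assume "x \<in> Domain R" "y \<in> Domain R"
  then obtain u v where "(x, u) \<in> R" "(y, v) \<in> R" by blast
  then have "(x + y, u + v) \<in> R" using int_module.subspace_add[OF R] by fastforce
  then show "x + y \<in> Domain R" by blast
next
  fix c x assume "x \<in> Domain R"
  then obtain u where "(x, u) \<in> R" by blast
  then have "(zmul c x, zmul c u) \<in> R" using int_module.subspace_scale[OF R] by (fastforce simp: zmul_Pair)
  then show "zmul c x \<in> Domain R" by blast
qed

lemma partial_hom_chain_Union:
  assumes "C \<noteq> {}" and chain: "subset.chain A C" and C: "\<And>R. R \<in> C \<Longrightarrow> partial_hom V R"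
  shows "partial_hom V (\<Union>C)"
proof -
  have common: "\<exists>R\<in>C. p \<in> R \<and> q \<in> R" if "p \<in> \<Union>C" "q \<in> \<Union>C" for p q
    using chain that unfolding subset_chain_def by blast
  have "int_module.subspace (\<Union>C)"
  proof (rule int_module.subspaceI)
    show "0 \<in> \<Union>C" using \<open>C \<noteq> {}\<close> C int_module.subspace_0 unfolding partial_hom_def by blast
  next
    fix p q assume "p \<in> \<Union>C" "q \<in> \<Union>C"
    then show "p + q \<in> \<Union>C"
      using common C int_module.subspace_add unfolding partial_hom_def by blast
  next
    fix c p assume "p \<in> \<Union>C"
    then show "zmul c p \<in> \<Union>C" using C int_module.subspace_scale unfolding partial_hom_def by blast
  qed
  moreover have "single_valued (\<Union>C)"
    using common C unfolding partial_hom_def single_valued_def by metis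
  moreover have "snd ` \<Union>C \<subseteq> V" using C unfolding partial_hom_def by blast
  ultimately show ?thesis unfolding partial_hom_def by blast
qed

lemma partial_hom_span_insert:
  assumes M: "partial_hom V M" and y: "y \<in> V" and V: "int_module.subspace V"
    and compatible: "\<And>n. zmul n x \<in> Domain M \<Longrightarrow> (zmul n x, zmul n y) \<in> M"
  shows "partial_hom V (int_module.span (insert (x, y) M))"
proof -
  have sM: "int_module.subspace M" and svM: "single_valued M" and sndM: "snd ` M \<subseteq> V"
    using M by (auto simp: partial_hom_def)
  have span_M: "int_module.span M = M" using sM by simp
  have mem: "p \<in> int_module.span (insert (x, y) M) \<longleftrightarrow> (\<exists>k. p - zmul k (x, y) \<in> M)" for p
    by (simp only: int_module.span_breakdown_eq span_M)
  have "snd p \<in> V" if p: "p \<in> int_module.span (insert (x, y) M)" for p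
  proof -
    obtain k where "p - zmul k (x, y) \<in> M" using mem p by blast
    then have "snd (p - zmul k (x, y)) \<in> V" using sndM by blast
    then have "snd p - zmul k y \<in> V" by (simp add: zmul_Pair)
    then have "(snd p - zmul k y) + zmul k y \<in> V"
      by (rule int_module.subspace_add[OF V _ int_module.subspace_scale[OF V y]])
    then show ?thesis by simp
  qed
  moreover have "v = 0" if v: "(0, v) \<in> int_module.span (insert (x, y) M)" for v
  proof -
    obtain k where "(0, v) - zmul k (x, y) \<in> M" using mem v by blast
    then have in_M: "(zmul (- k) x, v + zmul (- k) y) \<in> M" by (simp add: zmul_Pair)
    then have "(zmul (- k) x, zmul (- k) y) \<in> M" using compatible[of "- k"] by blast
    then have "v + zmul (- k) y = zmul (- k) y" using single_valuedD[OF svM in_M] by blast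
    then show "v = 0" by simp
  qed
  moreover have "int_module.subspace (int_module.span (insert (x, y) M))"
    by (rule int_module.subspace_span)
  ultimately show ?thesis
    unfolding partial_hom_def using single_valued_subspace_iff by blast
qed

lemma pow2_dvd_if_multiple_in_subgroup:
  assumes D: "int_module.subspace D" and n: "zmul n x \<in> D" and e: "zmul (2 ^ e) x \<in> D"
    and least: "\<And>j. j < e \<Longrightarrow> zmul (2 ^ j) x \<notin> D"
  shows "2 ^ e dvd n"
proof -
  obtain u v where uv: "u * n + v * 2 ^ e = gcd n (2 ^ e)" using bezout_int by blast
  have "zmul (gcd n (2 ^ e)) x = zmul u (zmul n x) + zmul v (zmul (2 ^ e) x)"
    by (simp add: uv[symmetric] int_module.scale_left_distrib)
  moreover have "zmul u (zmul n x) + zmul v (zmul (2 ^ e) x) \<in> D"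
    by (rule int_module.subspace_add[OF D int_module.subspace_scale[OF D n] int_module.subspace_scale[OF D e]])
  ultimately have gcd_in: "zmul (gcd n (2 ^ e)) x \<in> D" by simp
  obtain j where "j \<le> e" and j: "gcd n (2 ^ e) = 2 ^ j"
    using divides_primepow[OF two_is_prime, of "gcd n (2 ^ e)" e] by auto
  then have "j = e" using least[of j] gcd_in j by force
  then show ?thesis using j gcd_dvd1[of n "2 ^ e"] by simp
qed

lemma halve_pow:
  assumes halve: "\<And>v. v \<in> V \<Longrightarrow> \<exists>w\<in>V. w + w = v" and "v \<in> V"
  shows "\<exists>w\<in>V. zmul (2 ^ e) w = v"
  using \<open>v \<in> V\<close>
proof (induction e arbitrary: v)
  case (Suc e)
  then obtain w1 where "w1 \<in> V" "w1 + w1 = v" using halve by blast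
  moreover obtain w where "w \<in> V" "zmul (2 ^ e) w = w1" using Suc.IH \<open>w1 \<in> V\<close> by blast
  ultimately have "zmul (2 ^ Suc e) w = v"
    by (metis int_module.scale_scale power_Suc zmul_2)
  then show ?case using \<open>w \<in> V\<close> by blast
qed (simp add: zmul_1)

lemma partial_hom_extend_one:
  assumes M: "partial_hom V M" and V: "int_module.subspace V"
    and halve: "\<And>v. v \<in> V \<Longrightarrow> \<exists>w\<in>V. w + w = v" and k: "zmul (2 ^ k) x \<in> Domain M"
  shows "\<exists>y. partial_hom V (int_module.span (insert (x, y) M))"
proof -
  have sM: "int_module.subspace M" using M by (simp add: partial_hom_def)
  define e where "e = (LEAST e. zmul (2 ^ e) x \<in> Domain M)"
  have e: "zmul (2 ^ e) x \<in> Domain M" unfolding e_def using k by (rule LeastI)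
  have least: "\<And>j. j < e \<Longrightarrow> zmul (2 ^ j) x \<notin> Domain M" unfolding e_def by (rule not_less_Least)
  obtain w where w: "(zmul (2 ^ e) x, w) \<in> M" using e by blast
  then have "w \<in> V" using M by (force simp: partial_hom_def)
  then obtain y where y: "y \<in> V" "zmul (2 ^ e) y = w" using halve_pow[OF halve] by blast
  have "(zmul n x, zmul n y) \<in> M" if n: "zmul n x \<in> Domain M" for n
  proof -
    obtain q where "n = 2 ^ e * q"
      using pow2_dvd_if_multiple_in_subgroup[OF subspace_Domain[OF sM] n e least] by blast
    then have "(zmul n x, zmul n y) = zmul q (zmul (2 ^ e) x, w)"
      unfolding y(2)[symmetric] by (simp add: zmul_Pair mult.commute)
    then show ?thesis using int_module.subspace_scale[OF sM w] by simp
  qed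
  then show ?thesis using partial_hom_span_insert[OF M y(1) V] by blast
qed

lemma maximal_partial_hom_total:
  assumes M: "partial_hom V M" and V: "int_module.subspace V"
    and halve: "\<And>v. v \<in> V \<Longrightarrow> \<exists>w\<in>V. w + w = v"
    and primary: "\<And>x. \<exists>k. zmul (2 ^ k) x \<in> Domain M"
    and max: "\<And>X. partial_hom V X \<Longrightarrow> M \<subseteq> X \<Longrightarrow> X = M"
  shows "Domain M = UNIV"
proof (rule ccontr)
  assume "Domain M \<noteq> UNIV"
  then obtain x where x: "x \<notin> Domain M" by blast
  obtain y where ext: "partial_hom V (int_module.span (insert (x, y) M))"
    using partial_hom_extend_one[OF M V halve] primary by blast
  have "M \<subseteq> int_module.span (insert (x, y) M)" using int_module.span_superset by blast
  then have "int_module.span (insert (x, y) M) = M" using max ext by blast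
  moreover have "(x, y) \<in> int_module.span (insert (x, y) M)" by (simp add: int_module.span_base)
  ultimately show False using x by blast
qed

lemma total_partial_hom_additive:
  assumes M: "partial_hom V M" and total: "Domain M = UNIV"
  obtains F where "additive F" "range F \<subseteq> V" "\<And>x y. (x, y) \<in> M \<Longrightarrow> F x = y"
proof -
  have svM: "single_valued M" and sM: "int_module.subspace M" using M by (simp_all add: partial_hom_def)
  define F where "F x = (THE y. (x, y) \<in> M)" for x
  have F_eq: "F x = y" if "(x, y) \<in> M" for x y
    unfolding F_def using that by (rule the_equality) (use svM that in \<open>blast dest: single_valuedD\<close>)
  have FM: "(x, F x) \<in> M" for x using total F_eq by blast
  have "additive F"
  proof
    fix x y
    have "(x + y, F x + F y) \<in> M" using int_module.subspace_add[OF sM FM FM] by simp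
    then show "F (x + y) = F x + F y" by (rule F_eq)
  qed
  moreover have "range F \<subseteq> V" using FM M unfolding partial_hom_def by force
  ultimately show ?thesis using F_eq that by blast
qed

theorem additive_extension_2primary:
  assumes R: "partial_hom V R" and V: "int_module.subspace V"
    and halve: "\<And>v. v \<in> V \<Longrightarrow> \<exists>w\<in>V. w + w = v"
    and primary: "\<And>x. \<exists>k. zmul (2 ^ k) x \<in> Domain R"
  obtains F where "additive F" "range F \<subseteq> V" "\<And>x y. (x, y) \<in> R \<Longrightarrow> F x = y"
proof -
  let ?A = "{M. partial_hom V M \<and> R \<subseteq> M}"
  have "\<exists>M\<in>?A. \<forall>X\<in>?A. M \<subseteq> X \<longrightarrow> X = M"
  proof (rule subset_Zorn_nonempty)
    show "?A \<noteq> {}" using R by blast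
  next
    fix C assume "C \<noteq> {}" and chain: "subset.chain ?A C"
    moreover have "partial_hom V R" if "R \<in> C" for R using chain that by (auto simp: subset_chain_def)
    ultimately have "partial_hom V (\<Union>C)" by (rule partial_hom_chain_Union)
    moreover have "R \<subseteq> \<Union>C" using \<open>C \<noteq> {}\<close> chain unfolding subset_chain_def by blast
    ultimately show "\<Union>C \<in> ?A" by blast
  qed
  then obtain M where "M \<in> ?A" and max: "\<forall>X\<in>?A. M \<subseteq> X \<longrightarrow> X = M" ..
  then have M: "partial_hom V M" "R \<subseteq> M" by simp_all
  have "Domain M = UNIV"
  proof (rule maximal_partial_hom_total[OF M(1) V halve])
    show "\<exists>k. zmul (2 ^ k) x \<in> Domain M" for x using primary M(2) by blast
    show "X = M" if "partial_hom V X" "M \<subseteq> X" for X using max M(2) that by blast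
  qed
  then obtain F where "additive F" "range F \<subseteq> V" "\<And>x y. (x, y) \<in> M \<Longrightarrow> F x = y"
    using total_partial_hom_additive[OF M(1)] by blast
  then show ?thesis using that M(2) by blast
qed

lemma partial_hom_span_graph:
  assumes L: "independent_set L" and V: "int_module.subspace V" "val ` L \<subseteq> V"
    and torsion: "\<And>l n. l \<in> L \<Longrightarrow> zmul n l = 0 \<Longrightarrow> zmul n (val l) = 0"
  shows "partial_hom V (int_module.span ((\<lambda>l. (l, val l)) ` L))"
proof -
  let ?G = "(\<lambda>l. (l, val l)) ` L"
  have "int_module.subspace {p. snd p \<in> V}"
    using V(1) by (auto intro!: int_module.subspaceI simp: int_module.subspace_0 int_module.subspace_add
        int_module.subspace_scale additive.zmul[OF additive_snd])
  then have snd_V: "snd ` int_module.span ?G \<subseteq> V"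
    using V(2) int_module.span_minimal[of ?G "{p. snd p \<in> V}"] by force
  have "v = 0" if v: "(0, v) \<in> int_module.span ?G" for v
  proof -
    obtain t r where t: "finite t" "t \<subseteq> ?G" and sum: "(0, v) = (\<Sum>p\<in>t. zmul (r p) p)"
      using v unfolding int_module.span_explicit by blast
    obtain F where F: "F \<subseteq> L" "t = (\<lambda>l. (l, val l)) ` F" using t(2) subset_image_iff by metis
    have inj: "inj_on (\<lambda>l. (l, val l)) F" by (rule inj_onI) simp
    then have "finite F" using t(1) F(2) finite_imageD by blast
    define c where "c l = r (l, val l)" for l
    have "(0, v) = (\<Sum>l\<in>F. (zmul (c l) l, zmul (c l) (val l)))"
      unfolding sum F(2) sum.reindex[OF inj] by (simp add: c_def zmul_Pair)
    then have rel: "(\<Sum>l\<in>F. zmul (c l) l) = 0" and v_eq: "v = (\<Sum>l\<in>F. zmul (c l) (val l))"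
      by (simp_all add: prod_eq_iff fst_sum snd_sum)
    have "zmul (c l) (val l) = 0" if "l \<in> F" for l
      using torsion independent_setD[OF L \<open>finite F\<close> F(1) rel that] F(1) that by blast
    then show "v = 0" using v_eq by simp
  qed
  then have "single_valued (int_module.span ?G)"
    using single_valued_subspace_iff[OF int_module.subspace_span] by blast
  with snd_V show ?thesis unfolding partial_hom_def by simp
qed

theorem additive_extension_independent:
  assumes L: "independent_set L" and V: "int_module.subspace V" "val ` L \<subseteq> V"
    and torsion: "\<And>l n. l \<in> L \<Longrightarrow> zmul n l = 0 \<Longrightarrow> zmul n (val l) = 0"
    and halve: "\<And>v. v \<in> V \<Longrightarrow> \<exists>w\<in>V. w + w = v"
    and primary: "\<And>x. \<exists>k. zmul (2 ^ k) x \<in> int_module.span L"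
  obtains F where "additive F" "range F \<subseteq> V" "\<And>l. l \<in> L \<Longrightarrow> F l = val l"
proof -
  let ?R = "int_module.span ((\<lambda>l. (l, val l)) ` L)"
  have R: "partial_hom V ?R" by (rule partial_hom_span_graph[OF L V torsion])
  have graph: "(l, val l) \<in> ?R" if "l \<in> L" for l using that by (simp add: int_module.span_base)
  have "int_module.span L \<subseteq> Domain ?R"
    by (rule int_module.span_minimal) (use graph subspace_Domain[OF int_module.subspace_span] in auto)
  then have primary_R: "\<exists>k. zmul (2 ^ k) x \<in> Domain ?R" for x using primary by blast
  obtain F where F: "additive F" "range F \<subseteq> V" and FR: "\<And>x y. (x, y) \<in> ?R \<Longrightarrow> F x = y"
    using additive_extension_2primary[OF R V(1) halve primary_R] by blast
  show ?thesis by (rule that[OF F]) (use FR graph in blast)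
qed

section \<open>The target group\<close>

text \<open>\<open>\<rat>/\<int>\<close>, represented by the rationals in \<open>[0, 1)\<close>.\<close>

typedef circ = "{q::rat. 0 \<le> q \<and> q < 1}" morphisms rep_circ abs_circ
  by (rule exI[of _ 0]) simp

setup_lifting type_definition_circ

instantiation circ :: ab_group_add
begin
lift_definition zero_circ :: circ is 0 by simp
lift_definition plus_circ :: "circ \<Rightarrow> circ \<Rightarrow> circ" is "\<lambda>a b. frac (a + b)" by (simp add: frac_lt_1)
lift_definition uminus_circ :: "circ \<Rightarrow> circ" is "\<lambda>a. frac (- a)" by (simp add: frac_lt_1)
lift_definition minus_circ :: "circ \<Rightarrow> circ \<Rightarrow> circ" is "\<lambda>a b. frac (a - b)" by (simp add: frac_lt_1)
instance
proof
  fix a b c :: circ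
  show "a + b + c = a + (b + c)" by transfer (simp add: add.assoc)
  show "a + b = b + a" by transfer (simp add: add.commute)
  show "0 + a = a" by transfer (simp add: frac_eq)
  show "- a + a = 0" by transfer (metis add.commute frac_add_simps(2) frac_of_int of_int_0 right_minus)
  show "a - b = a + - b" by transfer (simp add: frac_add_simps(2))
qed
end
lift_definition circ_div2 :: "circ \<Rightarrow> circ" is "\<lambda>a. a / 2" by simp
lift_definition circ_half :: circ is "1 / 2" by simp

lemma circ_div2_double: "circ_div2 c + circ_div2 c = c"
  by transfer (simp add: frac_eq)

lemma circ_half_double: "circ_half + circ_half = 0"
  by transfer simp

lemma circ_half_neq_0: "circ_half \<noteq> 0"
  by transfer simp

lemma rep_circ_eq_0_iff: "rep_circ c = 0 \<longleftrightarrow> c = 0"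
  by (metis rep_circ_inject zero_circ.rep_eq)

lemma circ_div2_eq_0_iff: "circ_div2 c = 0 \<longleftrightarrow> c = 0"
  by (metis circ_div2.rep_eq divide_eq_0_iff rep_circ_eq_0_iff zero_neq_numeral)

lemma zmul_circ_half_eq_0_iff: "zmul n circ_half = 0 \<longleftrightarrow> even n"
  by (simp add: zmul_self_inverse[OF circ_half_double] circ_half_neq_0)

lemma dyadic_of_int: "dyadic (of_int m)"
  unfolding dyadic_def by (rule exI[of _ m], rule exI[of _ 0]) simp

lemma dyadic_0: "dyadic 0" and dyadic_1: "dyadic 1"
  using dyadic_of_int[of 0] dyadic_of_int[of 1] by simp_all

lemma dyadic_add: "dyadic x \<Longrightarrow> dyadic y \<Longrightarrow> dyadic (x + y)"
proof -
  assume "dyadic x" "dyadic y"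
  then obtain m k m' k' where x: "x = of_int m / 2 ^ k" and y: "y = of_int m' / 2 ^ k'"
    unfolding dyadic_def by blast
  have "x + y = of_int (m * 2 ^ k' + m' * 2 ^ k) / 2 ^ (k + k')"
    unfolding x y by (simp add: field_simps power_add)
  then show ?thesis unfolding dyadic_def by blast
qed

lemma dyadic_minus: "dyadic x \<Longrightarrow> dyadic (- x)"
  unfolding dyadic_def by (metis minus_divide_left of_int_minus)

lemma dyadic_div2: "dyadic x \<Longrightarrow> dyadic (x / 2)"
  unfolding dyadic_def by (metis divide_divide_eq_left power_Suc2)

lemma dyadic_frac: "dyadic x \<Longrightarrow> dyadic (frac x)"
  unfolding frac_def by (metis diff_conv_add_uminus dyadic_add dyadic_minus dyadic_of_int)

text \<open>The set \<open>target m k\<close> with its second component read in \<open>circ\<close>, so that it becomes a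
  subgroup of an \<open>ab_group_add\<close> type; \<open>rep_target\<close> translates back.\<close>

definition target_group :: "enat \<Rightarrow> enat \<Rightarrow> ((nat \<Rightarrow> rat) \<times> (nat \<Rightarrow> circ)) set" where
  "target_group m k = {(a, b). finite {i. a i \<noteq> 0} \<and> finite {i. b i \<noteq> 0} \<and>
     (\<forall>i. a i \<noteq> 0 \<longrightarrow> enat i < m) \<and> (\<forall>i. b i \<noteq> 0 \<longrightarrow> enat i < k) \<and>
     (\<forall>i. dyadic (a i)) \<and> (\<forall>i. dyadic (rep_circ (b i)))}"

lemma subspace_target_group: "int_module.subspace (target_group m k)"
proof (rule int_module_subspaceI)
  show "0 \<in> target_group m k"
    unfolding target_group_def by (simp add: zero_prod_def zero_circ.rep_eq dyadic_of_int[of 0, simplified])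
next
  fix p q assume p: "p \<in> target_group m k" and q: "q \<in> target_group m k"
  obtain a b a' b' where pq: "p = (a, b)" "q = (a', b')" by fastforce
  have "{i. a i + a' i \<noteq> 0} \<subseteq> {i. a i \<noteq> 0} \<union> {i. a' i \<noteq> 0}"
    and "{i. b i + b' i \<noteq> 0} \<subseteq> {i. b i \<noteq> 0} \<union> {i. b' i \<noteq> 0}" by auto
  then show "p + q \<in> target_group m k"
    using p q unfolding pq target_group_def
    by (auto simp: plus_circ.rep_eq intro!: dyadic_add dyadic_frac elim: finite_subset;
        metis add.right_neutral)
next
  fix p assume p: "p \<in> target_group m k"
  obtain a b where "p = (a, b)" by fastforce
  moreover have "{i. - b i \<noteq> 0} = {i. b i \<noteq> 0}" by auto
  ultimately show "- p \<in> target_group m k"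
    using p unfolding target_group_def by (auto simp: uminus_circ.rep_eq intro!: dyadic_minus dyadic_frac)
qed

lemma target_group_halve:
  assumes "v \<in> target_group m k"
  shows "\<exists>w\<in>target_group m k. w + w = v"
proof
  let ?w = "(\<lambda>i. fst v i / 2, \<lambda>i. circ_div2 (snd v i))"
  show "?w \<in> target_group m k"
    using assms unfolding target_group_def by (auto simp: circ_div2_eq_0_iff circ_div2.rep_eq dyadic_div2)
  show "?w + ?w = v" by (simp add: prod_eq_iff fun_eq_iff circ_div2_double)
qed

definition rep_target :: "(nat \<Rightarrow> rat) \<times> (nat \<Rightarrow> circ) \<Rightarrow> (nat \<Rightarrow> rat) \<times> (nat \<Rightarrow> rat)" where
  "rep_target p = (fst p, \<lambda>i. rep_circ (snd p i))"

lemma monomorphism_into_rep_target: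
  assumes F: "additive F" "inj F" "range F \<subseteq> target_group m k"
  shows "monomorphism_into m k (\<lambda>x. rep_target (F x))"
  unfolding monomorphism_into_def
proof (intro conjI allI)
  have "inj rep_target"
    by (rule injI) (simp add: rep_target_def prod_eq_iff fun_eq_iff rep_circ_inject)
  then show "inj (\<lambda>x. rep_target (F x))" using F(2) by (simp add: inj_compose[unfolded comp_def])
next
  fix x
  have "F x \<in> target_group m k" using F(3) by blast
  then show "rep_target (F x) \<in> target m k"
    unfolding target_group_def target_def rep_target_def using rep_circ
    by (auto simp: rep_circ_eq_0_iff)
next
  fix x y
  show "rep_target (F (x + y)) = target_add (rep_target (F x)) (rep_target (F y))"
    unfolding rep_target_def target_add_def by (simp add: additive.add[OF F(1)] plus_circ.rep_eq fun_eq_iff)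
qed

section \<open>Prescribed values on a maximal independent system\<close>

lemma sum_zmul_coordinate:
  assumes proj: "additive proj" and "finite A" "a0 \<in> A"
    and coord: "\<And>a. a \<in> A \<Longrightarrow> proj (v a) = (if a = a0 then u else 0)"
  shows "proj (\<Sum>a\<in>A. zmul (c a) (v a)) = zmul (c a0) u"
proof -
  have "proj (\<Sum>a\<in>A. zmul (c a) (v a)) = (\<Sum>a\<in>A. zmul (c a) (proj (v a)))"
    by (simp add: additive.sum[OF proj] additive.zmul[OF proj])
  also have "\<dots> = (\<Sum>a\<in>A. if a = a0 then zmul (c a0) u else 0)"
    by (rule sum.cong) (simp_all add: coord)
  finally show ?thesis using assms(2,3) by simp
qed

lemma additive_kernel_trivial_on_span:
  assumes F: "additive F" and FL: "\<And>l. l \<in> L \<Longrightarrow> F l = val l"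
    and z: "z \<in> int_module.span L" "F z = 0"
    and separating: "\<And>A c l. finite A \<Longrightarrow> A \<subseteq> L \<Longrightarrow> (\<Sum>a\<in>A. zmul (c a) (val a)) = 0 \<Longrightarrow> l \<in> A
      \<Longrightarrow> zmul (c l) l = 0"
  shows "z = 0"
proof -
  obtain A c where A: "finite A" "A \<subseteq> L" and z_eq: "z = (\<Sum>a\<in>A. zmul (c a) a)"
    using z(1) unfolding int_module.span_explicit by blast
  have "F z = (\<Sum>a\<in>A. zmul (c a) (val a))"
    using A(2) unfolding z_eq by (auto simp: additive.sum[OF F] additive.zmul[OF F] FL intro!: sum.cong)
  then have "zmul (c a) a = 0" if "a \<in> A" for a using separating[OF A] z(2) that by simp
  then show "z = 0" unfolding z_eq by simp
qed

definition basis_image ::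
    "nat set \<Rightarrow> nat set \<Rightarrow> (nat \<Rightarrow> 'a) \<Rightarrow> (nat \<Rightarrow> 'a) \<Rightarrow> 'a \<Rightarrow> (nat \<Rightarrow> rat) \<times> (nat \<Rightarrow> circ)" where
  "basis_image I J g h x =
     ((\<lambda>i. if i \<in> I \<and> x = g i then 1 else 0), (\<lambda>j. if j \<in> J \<and> x = h j then circ_half else 0))"

lemma basis_image_g:
  assumes "inj_on g I" "g ` I \<inter> h ` J = {}" "i \<in> I"
  shows "basis_image I J g h (g i) = ((\<lambda>j. if j = i then 1 else 0), 0)"
  using assms unfolding basis_image_def inj_on_def by (auto simp: fun_eq_iff)

lemma basis_image_h:
  assumes "inj_on h J" "g ` I \<inter> h ` J = {}" "j \<in> J"
  shows "basis_image I J g h (h j) = (0, \<lambda>i. if i = j then circ_half else 0)"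
  using assms unfolding basis_image_def inj_on_def by (auto simp: fun_eq_iff)

lemma basis_image_in_target_group:
  assumes "inj_on g I" "inj_on h J" "g ` I \<inter> h ` J = {}"
    and "\<And>i. i \<in> I \<Longrightarrow> enat i < m" "\<And>j. j \<in> J \<Longrightarrow> enat j < k" "x \<in> g ` I \<union> h ` J"
  shows "basis_image I J g h x \<in> target_group m k"
  using assms basis_image_g[OF assms(1,3)] basis_image_h[OF assms(2,3)] circ_half_neq_0
  unfolding target_group_def
  by (auto simp: zero_circ.rep_eq circ_half.rep_eq dyadic_0 dyadic_1 dyadic_div2[OF dyadic_1]
      split: if_splits)

lemma basis_image_torsion:
  assumes "inj_on h J" "g ` I \<inter> h ` J = {}" and h: "\<And>j. j \<in> J \<Longrightarrow> h j + h j = 0"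
    and g: "\<And>i. i \<in> I \<Longrightarrow> infinite_order (g i)"
    and x: "x \<in> g ` I \<union> h ` J" "x \<noteq> 0" "zmul n x = 0"
  shows "zmul n (basis_image I J g h x) = 0"
proof (cases "x \<in> g ` I")
  case True
  then obtain i where "i \<in> I" "x = g i" by blast
  then have "n = 0" using x(3) g infinite_order_zmul_eq_0_iff by blast
  then show ?thesis by simp
next
  case False
  then obtain j where j: "j \<in> J" "x = h j" using x(1) by blast
  then have "even n" using x(2,3) zmul_self_inverse[OF h[OF j(1)], of n] by (auto split: if_splits)
  have "basis_image I J g h x + basis_image I J g h x = 0"
    using basis_image_h[OF assms(1,2) j(1)] j(2) by (simp add: prod_eq_iff fun_eq_iff circ_half_double)
  then show ?thesis using zmul_self_inverse[of "basis_image I J g h x" n] \<open>even n\<close> by simp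
qed

lemma basis_image_separating:
  assumes h: "\<And>j. j \<in> J \<Longrightarrow> h j + h j = 0" and A: "finite A" "x \<in> A" "x \<in> g ` I \<union> h ` J"
    and rel: "(\<Sum>a\<in>A. zmul (c a) (basis_image I J g h a)) = 0"
  shows "zmul (c x) x = 0"
proof (cases "x \<in> g ` I")
  case True
  then obtain i where "i \<in> I" "x = g i" by blast
  have "additive (\<lambda>p :: (nat \<Rightarrow> rat) \<times> (nat \<Rightarrow> circ). fst p i)" by unfold_locales simp
  from sum_zmul_coordinate[OF this A(1,2), of "basis_image I J g h" 1 c]
  have "zmul (c x) (1::rat) = 0" using rel \<open>i \<in> I\<close> \<open>x = g i\<close> by (simp add: basis_image_def)
  then show ?thesis by (simp add: zmul_of_int)
next
  case False
  then obtain j where "j \<in> J" "x = h j" using A(3) by blast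
  have "additive (\<lambda>p :: (nat \<Rightarrow> rat) \<times> (nat \<Rightarrow> circ). snd p j)" by unfold_locales simp
  from sum_zmul_coordinate[OF this A(1,2), of "basis_image I J g h" circ_half c]
  have "zmul (c x) circ_half = 0" using rel \<open>j \<in> J\<close> \<open>x = h j\<close> by (simp add: basis_image_def)
  then show ?thesis
    using zmul_self_inverse[OF h[OF \<open>j \<in> J\<close>]] \<open>x = h j\<close> by (simp add: zmul_circ_half_eq_0_iff)
qed

theorem monomorphism_with_prescribed_values:
  fixes g h :: "nat \<Rightarrow> 'a::ab_group_add" and m k :: enat
  assumes g_inj: "inj_on g {i. enat i < m}" and h_inj: "inj_on h {i. enat i < k}"
    and max: "maximal_indep (\<lambda>_. True) (g ` {i. enat i < m} \<union> h ` {i. enat i < k})"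
    and g_inf: "\<forall>i. enat i < m \<longrightarrow> infinite_order (g i)"
    and h_socle: "\<forall>i. enat i < k \<longrightarrow> h i \<in> socle"
    and primary: "quotient_2primary (gen_subgroup (g ` {i. enat i < m}))"
  shows "\<exists>f. monomorphism_into m k f \<and>
      (\<forall>i. enat i < m \<longrightarrow> f (g i) = ((\<lambda>j. if j = i then 1 else 0), (\<lambda>_. 0))) \<and>
      (\<forall>i. enat i < k \<longrightarrow> f (h i) = ((\<lambda>_. 0), (\<lambda>j. if j = i then 1/2 else 0)))"
proof -
  define I J where "I = {i. enat i < m}" and "J = {i. enat i < k}"
  define L where "L = g ` I \<union> h ` J"
  let ?val = "basis_image I J g h"
  have L: "independent_set L" and ess: "essential (int_module.span L)"
    using max maximal_indep_iff_essential unfolding L_def I_def J_def by blast+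
  have g_inf_I: "infinite_order (g i)" if "i \<in> I" for i
    using g_inf that unfolding I_def by blast
  have h_order: "h j + h j = 0" if "j \<in> J" for j
    using h_socle that unfolding J_def socle_def by blast
  have disjoint: "g ` I \<inter> h ` J = {}"
    using g_inf_I h_order infinite_order_zmul_eq_0_iff[of _ 2] by (force simp: zmul_2)
  have val_in: "?val ` L \<subseteq> target_group m k"
    using basis_image_in_target_group[OF g_inj h_inj] disjoint unfolding L_def I_def J_def by blast
  have torsion: "zmul n (?val l) = 0" if "l \<in> L" "zmul n l = 0" for l n
  proof (rule basis_image_torsion[OF h_inj[folded J_def] disjoint h_order g_inf_I])
    show "l \<noteq> 0" using L \<open>l \<in> L\<close> by (auto simp: independent_set_def)
  qed (use that in \<open>simp_all add: L_def\<close>)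
  have primary_L: "\<exists>e. zmul (2 ^ e) x \<in> int_module.span L" for x
    using primary int_module.span_mono[of "g ` I" L]
    unfolding quotient_2primary_def gen_subgroup_eq_span L_def I_def by blast
  obtain F where F: "additive F" "range F \<subseteq> target_group m k"
    and FL: "\<And>l. l \<in> L \<Longrightarrow> F l = ?val l"
    using additive_extension_independent[OF L subspace_target_group val_in torsion target_group_halve
        primary_L] by blast
  have separating: "zmul (c x) x = 0"
    if "finite A" "A \<subseteq> L" "(\<Sum>a\<in>A. zmul (c a) (?val a)) = 0" "x \<in> A" for A c x
    by (rule basis_image_separating[OF h_order that(1,4)]) (use that(2-4) in \<open>auto simp: L_def\<close>)
  have "inj F"
  proof (rule additive_inj_if_essential[OF F(1) ess])
    fix z assume "z \<in> int_module.span L" "F z = 0"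
    with F(1) FL show "z = 0" by (rule additive_kernel_trivial_on_span) (assumption | rule separating)+
  qed
  then have "monomorphism_into m k (\<lambda>x. rep_target (F x))"
    using monomorphism_into_rep_target F by blast
  moreover have "rep_target (F (g i)) = ((\<lambda>j. if j = i then 1 else 0), (\<lambda>_. 0))" if "i \<in> I" for i
    using that FL basis_image_g[OF g_inj[folded I_def] disjoint] unfolding L_def
    by (simp add: rep_target_def zero_circ.rep_eq)
  moreover have "rep_target (F (h j)) = ((\<lambda>_. 0), (\<lambda>i. if i = j then 1/2 else 0))" if "j \<in> J" for j
    using that FL basis_image_h[OF h_inj[folded J_def] disjoint] unfolding L_def
    by (simp add: rep_target_def fun_eq_iff zero_circ.rep_eq circ_half.rep_eq)
  ultimately show ?thesis unfolding I_def J_def by blast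
qed

section \<open>Ranks\<close>

lemma exists_maximal_indep: "\<exists>S::'a::ab_group_add set. maximal_indep P S"
proof -
  let ?A = "{S::'a set. independent_set S \<and> (\<forall>x\<in>S. P x)}"
  have "\<Union>C \<in> ?A" if chain: "subset.chain ?A C" for C
  proof -
    have CA: "C \<subseteq> ?A" using chain by (simp add: subset_chain_def)
    have "independent_set (\<Union>C)"
      unfolding independent_set_def
    proof (intro conjI allI impI)
      show "0 \<notin> \<Union>C" using CA unfolding independent_set_def by blast
    next
      fix F n assume F: "finite F \<and> F \<subseteq> \<Union>C \<and> (\<Sum>x\<in>F. zmul (n x) x) = 0"
      show "\<forall>x\<in>F. zmul (n x) x = 0"
      proof (cases "C = {}")
        case False
        then obtain B where "B \<in> C" "F \<subseteq> B" using F finite_subset_Union_chain[OF _ _ False chain] by blast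
        then show ?thesis using CA F independent_setD by blast
      qed (use F in simp)
    qed
    then show ?thesis using CA by blast
  qed
  then obtain M where "M \<in> ?A" "\<forall>X\<in>?A. M \<subseteq> X \<longrightarrow> X = M" using subset_Zorn'[of ?A] by blast
  then have "maximal_indep P M" unfolding maximal_indep_def by blast
  then show ?thesis ..
qed

lemma span_torsion_free:
  assumes S: "independent_set S" "\<forall>s\<in>S. infinite_order s"
    and z: "z \<in> int_module.span S" "zmul n z = 0" "n \<noteq> 0"
  shows "z = 0"
proof -
  obtain F a where F: "finite F" "F \<subseteq> S" and z_eq: "z = (\<Sum>x\<in>F. zmul (a x) x)"
    using z(1) unfolding int_module.span_explicit by blast
  have rel: "(\<Sum>x\<in>F. zmul (n * a x) x) = 0"
    using z(2) unfolding z_eq by (simp add: int_module.scale_sum_right)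
  have "zmul (n * a x) x = 0" if "x \<in> F" for x
    using independent_setD[OF S(1) F, of "\<lambda>x. n * a x" x] rel that by simp
  then have "a x = 0" if "x \<in> F" for x
    using that F(2) S(2) z(3) infinite_order_zmul_eq_0_iff by fastforce
  then show ?thesis unfolding z_eq by simp
qed

lemma independent_Un_infinite_order_order_two:
  assumes S: "independent_set S" "\<forall>s\<in>S. infinite_order s"
    and T: "independent_set T" "\<forall>t\<in>T. order_two t"
  shows "independent_set (S \<union> T)"
  unfolding independent_set_def
proof (intro conjI allI impI ballI)
  show "0 \<notin> S \<union> T" using S(1) T(1) unfolding independent_set_def by blast
next
  fix F n x assume F: "finite F \<and> F \<subseteq> S \<union> T \<and> (\<Sum>x\<in>F. zmul (n x) x) = 0" and "x \<in> F"
  have "(\<Sum>y\<in>F. zmul (n y) y) = (\<Sum>y\<in>F \<inter> S. zmul (n y) y) + (\<Sum>y\<in>F - S. zmul (n y) y)"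
    using F by (intro sum.Int_Diff) blast
  then have split: "(\<Sum>y\<in>F \<inter> S. zmul (n y) y) + (\<Sum>y\<in>F - S. zmul (n y) y) = 0"
    using F by simp
  have T_doubled: "zmul 2 (zmul (n y) y) = 0" if "y \<in> F - S" for y
  proof -
    have "y + y = 0" using that F T(2) by (auto simp: order_two_def)
    then have "zmul (2 * n y) y = 0" using zmul_self_inverse[of y "2 * n y"] by simp
    then show ?thesis by simp
  qed
  have "zmul 2 (\<Sum>y\<in>F - S. zmul (n y) y) = 0"
    unfolding int_module.scale_sum_right by (rule sum.neutral) (use T_doubled in blast)
  then have "zmul 2 (\<Sum>y\<in>F \<inter> S. zmul (n y) y) = 0"
    using arg_cong[OF split, of "zmul 2"] by (simp only: int_module.scale_right_distrib) simp
  then have "(\<Sum>y\<in>F \<inter> S. zmul (2 * n y) y) = 0"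
    by (simp add: int_module.scale_sum_right)
  then have "zmul (2 * n y) y = 0" if "y \<in> F \<inter> S" for y
    using independent_setD[OF S(1), of "F \<inter> S" "\<lambda>y. 2 * n y" y] F that by simp
  then have S_zero: "n y = 0" if "y \<in> F \<inter> S" for y
    using that S(2) infinite_order_zmul_eq_0_iff by fastforce
  then have "(\<Sum>y\<in>F - S. zmul (n y) y) = 0" using split by simp
  then have "zmul (n y) y = 0" if "y \<in> F - S" for y
    using independent_setD[OF T(1), of "F - S" n y] F that by blast
  then show "zmul (n x) x = 0" using S_zero \<open>x \<in> F\<close> by (cases "x \<in> S") auto
qed

lemma essential_span_Un_infinite_order_order_two:
  assumes S: "maximal_indep infinite_order S" and T: "maximal_indep order_two T"
    and primary: "quotient_2primary (gen_subgroup S)"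
  shows "essential (int_module.span (S \<union> T))"
  unfolding essential_def
proof (intro allI impI)
  fix x :: 'a assume "x \<noteq> 0"
  have span_Un: "int_module.span S \<subseteq> int_module.span (S \<union> T)" "int_module.span T \<subseteq> int_module.span (S \<union> T)"
    by (simp_all add: int_module.span_mono)
  show "\<exists>c. zmul c x \<noteq> 0 \<and> zmul c x \<in> int_module.span (S \<union> T)"
  proof (cases "infinite_order x")
    case True
    then show ?thesis using maximal_indep_multiple_in_span[OF S _ \<open>x \<noteq> 0\<close>] span_Un by blast
  next
    case False
    then obtain n :: nat where n: "n > 0" "zmul (int n) x = 0" unfolding infinite_order_def by blast
    obtain e0 :: nat where e0: "zmul (2 ^ e0) x \<in> int_module.span S"
      using primary unfolding quotient_2primary_def gen_subgroup_eq_span by blast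
    have "zmul (int n) (zmul (2 ^ e0) x) = 0"
      using n(2) by (metis int_module.scale_left_commute int_module.scale_zero_right)
    then have "zmul (2 ^ e0) x = 0"
      using span_torsion_free[OF _ _ e0] S n(1) by (simp add: maximal_indep_def)
    then have ex: "\<exists>e. zmul (2 ^ e) x = 0" ..
    define e where "e = (LEAST e. zmul (2 ^ e) x = 0)"
    have e: "zmul (2 ^ e) x = 0" unfolding e_def using ex by (rule LeastI_ex)
    have least: "\<And>j. j < e \<Longrightarrow> zmul (2 ^ j) x \<noteq> 0" unfolding e_def by (rule not_less_Least)
    have "e \<noteq> 0"
    proof
      assume "e = 0"
      then show False using e \<open>x \<noteq> 0\<close> by (simp add: zmul_1)
    qed
    then obtain e' where e': "e = Suc e'" using not0_implies_Suc by blast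
    define y where "y = zmul (2 ^ e') x"
    have "y \<noteq> 0" using least[of e'] e' unfolding y_def by simp
    moreover have "y + y = 0" using e e' unfolding y_def by (simp add: zmul_2[symmetric] mult.commute)
    ultimately obtain d where "zmul d y \<noteq> 0" "zmul d y \<in> int_module.span T"
      using maximal_indep_multiple_in_span[OF T] unfolding order_two_def by blast
    then show ?thesis using span_Un unfolding y_def by (auto intro!: exI[of _ "d * 2 ^ e'"])
  qed
qed

lemma maximal_indep_Un_infinite_order_order_two:
  assumes S: "maximal_indep infinite_order S" and T: "maximal_indep order_two T"
    and primary: "quotient_2primary (gen_subgroup S)"
  shows "maximal_indep (\<lambda>_. True) (S \<union> T)"
proof -
  have "independent_set (S \<union> T)"
    using S T by (intro independent_Un_infinite_order_order_two) (simp_all add: maximal_indep_def)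
  then show ?thesis
    using essential_span_Un_infinite_order_order_two[OF S T primary] by (simp add: maximal_indep_iff_essential)
qed

interpretation rat_seq: vector_space "\<lambda>(c::rat) (v::'i \<Rightarrow> rat) j. c * v j"
  by unfold_locales (auto simp: fun_eq_iff algebra_simps)

lemma additive_span_image:
  fixes A :: "'a::ab_group_add \<Rightarrow> 'i \<Rightarrow> rat"
  assumes A: "additive A" and "x \<in> int_module.span S"
  shows "A x \<in> rat_seq.span (A ` S)"
  using assms(2)
proof (induction rule: int_module.span_induct_alt)
  case base then show ?case by (metis additive.zero[OF A] rat_seq.span_zero)
next
  case (step c x y)
  have "A (zmul c x + y) = (\<lambda>j. of_int c * A x j) + A y"
    by (simp add: additive.add[OF A] additive.zmul[OF A] fun_eq_iff zmul_apply zmul_of_int[where 'a = rat])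
  moreover have "(\<lambda>j. of_int c * A x j) \<in> rat_seq.span (A ` S)"
    using step(1) by (intro rat_seq.span_scale rat_seq.span_base) simp
  ultimately show ?case using step(2) by (metis rat_seq.span_add)
qed

lemma independent_unit_vectors: "rat_seq.independent ((\<lambda>i j. if j = i then (1::rat) else 0) ` I)"
  unfolding rat_seq.independent_explicit_module
proof (intro allI impI)
  fix t u v assume t: "finite t" "t \<subseteq> (\<lambda>i j. if j = i then (1::rat) else 0) ` I"
    "(\<Sum>w\<in>t. (\<lambda>j. u w * w j)) = 0" "v \<in> t"
  then obtain i where i: "v = (\<lambda>j. if j = i then 1 else 0)" by blast
  have coord: "w i = (if w = v then 1 else 0)" if w_t: "w \<in> t" for w
  proof -
    obtain i' where w: "w = (\<lambda>j. if j = i' then 1 else 0)" using w_t t(2) by blast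
    have "w = v \<longleftrightarrow> i' = i"
    proof
      assume "w = v"
      then have "w i' = v i'" by simp
      then show "i' = i" unfolding w i by (simp split: if_splits)
    qed (simp add: w i)
    then show ?thesis unfolding w by auto
  qed
  have "(\<Sum>w\<in>t. (\<lambda>j. u w * w j)) i = (\<Sum>w\<in>t. u w * w i)"
    by (simp add: additive.sum[OF additive_apply])
  also have "\<dots> = (\<Sum>w\<in>t. if w = v then u w else 0)"
    by (rule sum.cong) (simp_all add: coord)
  finally show "u v = 0" using t(1,3,4) by simp
qed

lemma card_le_card_maximal_indep:
  fixes A :: "'a::ab_group_add \<Rightarrow> nat \<Rightarrow> rat" and S :: "'a set"
  assumes A: "additive A" and "finite I"
    and unit: "\<And>i. i \<in> I \<Longrightarrow> A (g i) = (\<lambda>j. if j = i then 1 else 0)"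
    and g_inf: "\<And>i. i \<in> I \<Longrightarrow> infinite_order (g i)"
    and S: "maximal_indep infinite_order S" "finite S"
  shows "card I \<le> card S"
proof -
  define e :: "nat \<Rightarrow> nat \<Rightarrow> rat" where "e i = (\<lambda>j. if j = i then 1 else 0)" for i
  have "e i \<in> rat_seq.span (A ` S)" if i: "i \<in> I" for i
  proof -
    have "g i \<noteq> 0" using g_inf[OF i] infinite_order_zmul_eq_0_iff[of "g i" 1] by (simp add: zmul_1)
    then obtain c where c: "zmul c (g i) \<noteq> 0" "zmul c (g i) \<in> int_module.span S"
      using maximal_indep_multiple_in_span[OF S(1) g_inf[OF i]] by blast
    then have "c \<noteq> 0" by auto
    have "A (zmul c (g i)) = (\<lambda>j. of_int c * e i j)"
      by (simp add: additive.zmul[OF A] unit[OF i] e_def fun_eq_iff zmul_apply zmul_of_int[where 'a = rat])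
    moreover have "(\<lambda>j. inverse (of_int c) * A (zmul c (g i)) j) \<in> rat_seq.span (A ` S)"
      by (rule rat_seq.span_scale[OF additive_span_image[OF A c(2)]])
    moreover have "(\<lambda>j. inverse (of_int c) * (of_int c * e i j)) = e i"
      using \<open>c \<noteq> 0\<close> by (simp add: fun_eq_iff)
    ultimately show ?thesis by simp
  qed
  then have "card (e ` I) \<le> card (A ` S)"
    using rat_seq.independent_span_bound[of "A ` S" "e ` I"] independent_unit_vectors S(2)
    unfolding e_def by blast
  moreover have "inj e" by (rule injI) (metis e_def zero_neq_one)
  then have "card (e ` I) = card I" by (simp add: card_image inj_on_subset)
  ultimately show ?thesis using card_image_le[OF S(2), of A] by simp
qed

lemma rank_le_ecard_maximal_indep:
  fixes A :: "'a::ab_group_add \<Rightarrow> nat \<Rightarrow> rat" and S :: "'a set" and r :: enat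
  assumes A: "additive A"
    and unit: "\<And>i. enat i < r \<Longrightarrow> A (g i) = (\<lambda>j. if j = i then 1 else 0)"
    and g_inf: "\<And>i. enat i < r \<Longrightarrow> infinite_order (g i)"
    and S: "maximal_indep infinite_order S"
  shows "r \<le> ecard S"
proof (cases "finite S")
  case True
  have bound: "n \<le> card S" if n: "enat n \<le> r" for n
  proof -
    have "enat i < r" if "i < n" for i using that n by (meson enat_ord_simps(2) order_less_le_trans)
    then show ?thesis using card_le_card_maximal_indep[OF A _ unit g_inf S True, of "{..<n}"] by simp
  qed
  show ?thesis
  proof (cases r)
    case (enat a)
    then show ?thesis using bound[of a] True by (simp add: ecard_def)
  next
    case infinity
    then show ?thesis using bound[of "Suc (card S)"] by simp
  qed
qed (simp add: ecard_def)

lemma enumerate_countable: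
  assumes "countable X"
  obtains g where "bij_betw g {i. enat i < ecard X} X"
proof (cases "finite X")
  case True
  then have "{i. enat i < ecard X} = {..<card X}" by (auto simp: ecard_def)
  then show ?thesis using bij_betw_from_nat_into_finite[OF True] that by metis
next
  case False
  then have "{i. enat i < ecard X} = UNIV" by (simp add: ecard_def)
  then show ?thesis using bij_betw_from_nat_into[OF assms False] that by metis
qed

lemma rank_witness:
  assumes "\<exists>S::'a::ab_group_add set. maximal_indep P S"
  obtains S where "maximal_indep P S" "(SOME r. \<exists>S::'a set. maximal_indep P S \<and> r = ecard S) = ecard S"
  using someI_ex[of "\<lambda>r. \<exists>S::'a set. maximal_indep P S \<and> r = ecard S"] assms that by blast

lemma monomorphism_into_mono:
  assumes "monomorphism_into m k f" "m \<le> m'" "k \<le> k'"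
  shows "monomorphism_into m' k' f"
proof -
  have "target m k \<subseteq> target m' k'"
    using assms(2,3) unfolding target_def by (auto intro: order_less_le_trans)
  then show ?thesis using assms(1) unfolding monomorphism_into_def by blast
qed

lemma exists_monomorphism:
  assumes "countable (UNIV :: 'a set)" and "even_by_quotient TYPE('a::ab_group_add)"
  shows "\<exists>f :: 'a \<Rightarrow> _. monomorphism_into (r0 TYPE('a)) (r2 TYPE('a)) f"
proof -
  obtain S :: "'a set" where S: "maximal_indep infinite_order S"
    and primary: "quotient_2primary (gen_subgroup S)"
    using assms(2) unfolding even_by_quotient_def by blast
  obtain T :: "'a set" where T: "maximal_indep order_two T" and r2: "r2 TYPE('a) = ecard T"
    using rank_witness[OF exists_maximal_indep] unfolding r2_def by blast
  obtain S' :: "'a set" where S': "maximal_indep infinite_order S'" and r0: "r0 TYPE('a) = ecard S'"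
    using rank_witness[of infinite_order] S unfolding r0_def by blast
  obtain g where g: "bij_betw g {i. enat i < ecard S} S"
    using enumerate_countable[OF countable_subset[OF subset_UNIV assms(1)]] .
  obtain h where h: "bij_betw h {i. enat i < ecard T} T"
    using enumerate_countable[OF countable_subset[OF subset_UNIV assms(1)]] .
  have g_image: "g ` {i. enat i < ecard S} = S" and h_image: "h ` {i. enat i < ecard T} = T"
    using g h by (simp_all add: bij_betw_def)
  have g_inf: "infinite_order (g i)" if "enat i < ecard S" for i
    using S g_image that unfolding maximal_indep_def by blast
  have h_socle: "\<forall>i. enat i < ecard T \<longrightarrow> h i \<in> socle"
    using T h_image unfolding maximal_indep_def order_two_def socle_def by blast
  have max_L: "maximal_indep (\<lambda>_. True) (g ` {i. enat i < ecard S} \<union> h ` {i. enat i < ecard T})"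
    unfolding g_image h_image by (rule maximal_indep_Un_infinite_order_order_two[OF S T primary])
  have primary_g: "quotient_2primary (gen_subgroup (g ` {i. enat i < ecard S}))"
    unfolding g_image by (rule primary)
  have g_inf_all: "\<forall>i. enat i < ecard S \<longrightarrow> infinite_order (g i)" using g_inf by blast
  obtain f where f: "monomorphism_into (ecard S) (ecard T) f"
    and f_g: "\<forall>i. enat i < ecard S \<longrightarrow> f (g i) = ((\<lambda>j. if j = i then 1 else 0), (\<lambda>_. 0))"
    using monomorphism_with_prescribed_values[OF bij_betw_imp_inj_on[OF g] bij_betw_imp_inj_on[OF h]
        max_L g_inf_all h_socle primary_g] by blast
  have "additive (\<lambda>x. fst (f x))"
    using f by unfold_locales (simp add: monomorphism_into_def target_add_def plus_fun_def)
  then have "ecard S \<le> ecard S'"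
    by (rule rank_le_ecard_maximal_indep[where g = g, OF _ _ g_inf S']) (simp add: f_g)
  then show ?thesis using monomorphism_into_mono[OF f] r0 r2 by (intro exI[of _ f]) simp
qed

theorem mainTheorem7:
  fixes g h :: "nat \<Rightarrow> 'a::ab_group_add"
  assumes "countable (UNIV :: 'a set)"
    and "even_by_quotient TYPE('a)"
  shows "(\<exists>f::'a \<Rightarrow> (nat \<Rightarrow> rat) \<times> (nat \<Rightarrow> rat).
            monomorphism_into (r0 TYPE('a)) (r2 TYPE('a)) f)
          \<and> (inj_on g {i. enat i < r0 TYPE('a)} \<and>
          inj_on h {i. enat i < r2 TYPE('a)} \<and>
          maximal_indep (\<lambda>_. True) (g ` {i. enat i < r0 TYPE('a)} \<union> h ` {i. enat i < r2 TYPE('a)}) \<and>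
          (\<forall>i. enat i < r0 TYPE('a) \<longrightarrow> infinite_order (g i)) \<and>
          (\<forall>i. enat i < r2 TYPE('a) \<longrightarrow> h i \<in> socle) \<and>
          quotient_2primary (gen_subgroup (g ` {i. enat i < r0 TYPE('a)})) 
         \<longrightarrow> (\<exists>f::'a \<Rightarrow> (nat \<Rightarrow> rat) \<times> (nat \<Rightarrow> rat).
            monomorphism_into (r0 TYPE('a)) (r2 TYPE('a)) f \<and>
            (\<forall>i. enat i < r0 TYPE('a) \<longrightarrow> f (g i) = ((\<lambda>j. if j = i then 1 else 0), (\<lambda>_. 0))) \<and>
            (\<forall>i. enat i < r2 TYPE('a) \<longrightarrow> f (h i) = ((\<lambda>_. 0), (\<lambda>j. if j = i then 1/2 else 0)))))"
proof (intro conjI impI)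
  show "\<exists>f::'a \<Rightarrow> _. monomorphism_into (r0 TYPE('a)) (r2 TYPE('a)) f"
    by (rule exists_monomorphism[OF assms])
next
  assume "inj_on g {i. enat i < r0 TYPE('a)} \<and> inj_on h {i. enat i < r2 TYPE('a)} \<and>
    maximal_indep (\<lambda>_. True) (g ` {i. enat i < r0 TYPE('a)} \<union> h ` {i. enat i < r2 TYPE('a)}) \<and>
    (\<forall>i. enat i < r0 TYPE('a) \<longrightarrow> infinite_order (g i)) \<and> (\<forall>i. enat i < r2 TYPE('a) \<longrightarrow> h i \<in> socle) \<and>
    quotient_2primary (gen_subgroup (g ` {i. enat i < r0 TYPE('a)}))"
  then show "\<exists>f. monomorphism_into (r0 TYPE('a)) (r2 TYPE('a)) f \<and>
      (\<forall>i. enat i < r0 TYPE('a) \<longrightarrow> f (g i) = ((\<lambda>j. if j = i then 1 else 0), (\<lambda>_. 0))) \<and>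
      (\<forall>i. enat i < r2 TYPE('a) \<longrightarrow> f (h i) = ((\<lambda>_. 0), (\<lambda>j. if j = i then 1/2 else 0)))"
    by (elim conjE) (rule monomorphism_with_prescribed_values)
qed

end
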